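(* Let $d/2<k<d$ be integers with $(2k-d)^2<4k-d-2$. Then $A''(t)>0$ for all $t\ge1$, and $A'(1)=\frac{k\,(4k-d-2-(2k-d)^2)}{2d(d-1)}$.
   Context: $g(t)=\binom dk^{-1}\sum_{j=0}^{d-k}\binom kj\binom{d-k}{j}t^j$ and $A(t)=(t+1)g(t)-\frac{d}{2(d-k)}g(t)-\frac{t(t+1)g'(t)}{k}$. *)

theory Defs
  imports "HOL-Analysis.Analysis"
begin

definition g :: "nat \<Rightarrow> nat \<Rightarrow> real \<Rightarrow> real" where
  "g d k t = inverse (real (d choose k)) *
     (\<Sum>j=0..d-k. real (k choose j) * real ((d-k) choose j) * t ^ j)"

definition A :: "nat \<Rightarrow> nat \<Rightarrow> real \<Rightarrow> real" where
  "A d k t = (t + 1) * g d k t - real d / (2 * real (d - k)) * g d k t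
             - t * (t + 1) * deriv (g d k) t / real k"

end

theory Submission
  imports Defs "HOL-Computational_Algebra.Polynomial"
begin

(* Write u = t - 1. By Vandermonde's identity, g is the polynomial in u with coefficients
   b_n = C(d-k,n) C(d-n,k-n) / C(d,k) for n <= d-k, and (n+1)(d-n) b_(n+1) = (d-k-n)(k-n) b_n.
   Hence A is a polynomial in u whose coefficient of u^n (n >= 1) is a combination of b_(n-1),
   b_n and b_(n+1). For n = d-k+1 it equals b_(d-k) (2k-d)/k; for 2 <= n <= d-k the recurrence
   turns its positivity into a polynomial inequality in n, d-k and s = 2k-d, which follows from
   the hypothesis s^2 < 2(d-k) + 3s - 2 = 4k-d-2. So A'' has nonnegative coefficients in u and
   a positive constant term, while A'(1) is the coefficient of u, computed from b_1 and b_2. *)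

lemma deriv_poly_shift:
  fixes p :: "'a::real_normed_field poly"
  shows "deriv (\<lambda>x. poly p (x - c)) = (\<lambda>x. poly (pderiv p) (x - c))"
proof
  fix x
  have "((\<lambda>x. poly p (x - c)) has_field_derivative poly (pderiv p) (x - c) * 1) (at x)"
    by (rule DERIV_chain2[OF poly_DERIV]) (auto intro!: derivative_eq_intros)
  then show "deriv (\<lambda>x. poly p (x - c)) x = poly (pderiv p) (x - c)"
    by (simp add: DERIV_imp_deriv)
qed

lemma poly_pos_if_coeffs_nonneg:
  fixes p :: "'a::linordered_idom poly"
  assumes "\<And>i. 0 \<le> coeff p i" and "0 < coeff p 0" and "0 \<le> x"
  shows "0 < poly p x"
proof -
  have "coeff p 0 * x ^ 0 \<le> (\<Sum>i\<le>degree p. coeff p i * x ^ i)"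
    by (rule member_le_sum) (use assms in auto)
  then show ?thesis
    unfolding poly_altdef using assms(2) by simp
qed

lemma sum_choose_choose_choose:
  fixes k m i :: nat
  assumes "m \<le> k" "i \<le> m"
  shows "(\<Sum>j\<le>m. (k choose j) * (m choose j) * (j choose i))
       = (m choose i) * ((k + m - i) choose (k - i))"
proof -
  have "(\<Sum>j\<le>m. (k choose j) * (m choose j) * (j choose i))
      = (\<Sum>j=i..m. (k choose j) * (m choose j) * (j choose i))"
    by (rule sum.mono_neutral_right) auto
  also have "\<dots> = (\<Sum>l=0..m-i. (k choose (l + i)) * (m choose (l + i)) * ((l + i) choose i))"
    using sum.shift_bounds_cl_nat_ivl[of _ 0 i "m - i"] assms by simp
  also have "\<dots> = (m choose i) * (\<Sum>l\<le>m-i. ((m - i) choose l) * (k choose (k - i - l)))"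
    unfolding sum_distrib_left atLeast0AtMost
  proof (rule sum.cong)
    fix l assume "l \<in> {..m-i}"
    then have "l + i \<le> m" "l + i \<le> k" using assms by auto
    then show "(k choose (l + i)) * (m choose (l + i)) * ((l + i) choose i)
             = (m choose i) * (((m - i) choose l) * (k choose (k - i - l)))"
      using choose_mult[of i "l + i" m] binomial_symmetric[of "l + i" k]
      by (simp add: diff_diff_add add.commute)
  qed simp
  also have "(\<Sum>l\<le>m-i. ((m - i) choose l) * (k choose (k - i - l)))
           = (\<Sum>l\<le>k-i. ((m - i) choose l) * (k choose (k - i - l)))"
    using assms by (intro sum.mono_neutral_left) auto
  also have "\<dots> = (k + m - i) choose (k - i)"
    using vandermonde[of "m - i" k "k - i"] assms by (simp add: add.commute)
  finally show ?thesis .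
qed

definition g_coeff :: "nat \<Rightarrow> nat \<Rightarrow> nat \<Rightarrow> real" where
  "g_coeff d k n = real ((d - k) choose n) * real ((d - n) choose (k - n)) / real (d choose k)"

definition g_poly :: "nat \<Rightarrow> nat \<Rightarrow> real poly" where
  "g_poly d k = (\<Sum>n\<le>d - k. monom (g_coeff d k n) n)"

lemma coeff_g_poly: "coeff (g_poly d k) n = g_coeff d k n"
  by (auto simp: g_poly_def coeff_sum coeff_monom g_coeff_def)

lemma g_coeff_0: "k \<le> d \<Longrightarrow> g_coeff d k 0 = 1"
  by (simp add: g_coeff_def zero_less_binomial_iff)

lemma g_coeff_pos: "k \<le> d \<Longrightarrow> n \<le> d - k \<Longrightarrow> 0 < g_coeff d k n"
  by (simp add: g_coeff_def zero_less_binomial_iff)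

lemma g_coeff_eq_0: "d - k < n \<Longrightarrow> g_coeff d k n = 0"
  by (simp add: g_coeff_def)

lemma g_coeff_Suc_ratio:
  assumes "d - k \<le> k" "k \<le> d"
  shows "real (Suc n) * real (d - n) * g_coeff d k (Suc n)
       = real (d - k - n) * real (k - n) * g_coeff d k n"
proof (cases "n < d - k")
  case True
  define m where "m = d - k"
  have "Suc n * (m choose Suc n) = (m - n) * (m choose n)"
    using binomial_absorption[of n m] binomial_absorb_comp[of m n] by simp
  moreover have "(d - n) * ((d - Suc n) choose (k - Suc n)) = (k - n) * ((d - n) choose (k - n))"
    using times_binomial_minus1_eq[of "k - n" "d - n"] True assms
    by (simp add: m_def diff_diff_add)
  ultimately have "real (Suc n * (m choose Suc n)) * real ((d - n) * ((d - Suc n) choose (k - Suc n)))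
      = real ((m - n) * (m choose n)) * real ((k - n) * ((d - n) choose (k - n)))"
    by simp
  then show ?thesis
    by (simp add: g_coeff_def m_def[symmetric] field_simps)
next
  case False
  then show ?thesis by (simp add: g_coeff_def)
qed

lemma g_eq_poly_shift:
  assumes "d - k \<le> k" "k \<le> d"
  shows "g d k t = poly (g_poly d k) (t - 1)"
proof -
  define m where "m = d - k"
  have "m \<le> k" "d = k + m" using assms by (simp_all add: m_def)
  have "(\<Sum>j=0..m. real (k choose j) * real (m choose j) * t ^ j)
      = (\<Sum>j\<le>m. \<Sum>i\<le>m. real ((k choose j) * (m choose j) * (j choose i)) * (t - 1) ^ i)"
  proof (rule sum.cong)
    fix j assume "j \<in> {..m}"
    then have "t ^ j = (\<Sum>i\<le>m. real (j choose i) * (t - 1) ^ i)"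
      using binomial_ring[of "t - 1" 1 j] by (simp add: sum.mono_neutral_left)
    then show "real (k choose j) * real (m choose j) * t ^ j
             = (\<Sum>i\<le>m. real ((k choose j) * (m choose j) * (j choose i)) * (t - 1) ^ i)"
      by (simp add: sum_distrib_left mult.assoc)
  qed (simp add: atLeast0AtMost)
  also have "\<dots> = (\<Sum>i\<le>m. real (\<Sum>j\<le>m. (k choose j) * (m choose j) * (j choose i)) * (t - 1) ^ i)"
    by (subst sum.swap) (simp add: sum_distrib_right)
  also have "\<dots> = (\<Sum>i\<le>m. real ((m choose i) * ((k + m - i) choose (k - i))) * (t - 1) ^ i)"
    using sum_choose_choose_choose[OF \<open>m \<le> k\<close>] by simp
  finally show ?thesis
    unfolding g_def g_poly_def poly_sum poly_monom g_coeff_def m_def[symmetric]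
    by (simp add: sum_distrib_left \<open>d = k + m\<close> field_simps)
qed

(* In the variable u = t - 1: t + 1 = u + 2 and t (t + 1) = u^2 + 3 u + 2. *)

definition A_poly :: "nat \<Rightarrow> nat \<Rightarrow> real poly" where
  "A_poly d k = [:2, 1:] * g_poly d k - smult (real d / (2 * real (d - k))) (g_poly d k)
      - smult (1 / real k) ([:2, 3, 1:] * pderiv (g_poly d k))"

lemma A_eq_poly_shift:
  assumes "d - k \<le> k" "k \<le> d"
  shows "A d k = (\<lambda>t. poly (A_poly d k) (t - 1))"
proof
  fix t
  have g_fun: "g d k = (\<lambda>t. poly (g_poly d k) (t - 1))"
    using g_eq_poly_shift[OF assms] by blast
  show "A d k t = poly (A_poly d k) (t - 1)"
    unfolding A_def A_poly_def g_fun deriv_poly_shift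
    by (simp add: algebra_simps power2_eq_square add_divide_distrib)
qed

lemma coeff_A_poly_Suc:
  "coeff (A_poly d k) (Suc j)
     = g_coeff d k j + (2 - real d / (2 * real (d - k))) * g_coeff d k (Suc j)
       - (real j * g_coeff d k j + 3 * real (Suc j) * g_coeff d k (Suc j)
          + 2 * real (j + 2) * g_coeff d k (j + 2)) / real k"
  by (cases j)
    (simp_all add: A_poly_def coeff_pderiv coeff_g_poly algebra_simps add_divide_distrib
      diff_divide_distrib)

lemma key_inequality:
  fixes n p s :: real
  assumes n: "2 \<le> n" and p: "0 \<le> p" and s: "0 < s"
    and cond: "s\<^sup>2 < 2 * (n + p) + 3 * s - 2"
  shows "(p + 1) * s\<^sup>2 * (s + p)
       < n * (n + p) * (2 * s\<^sup>2 + (4 * n + 5 * p - 1) * s + 2 * (n + p) * (n + p - 1))"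
proof -
  define Q where "Q = 2 * (n + p) + 3 * s - 2"
  define R where "R = 2 * s\<^sup>2 + (4 * n + 5 * p - 1) * s + 2 * (n + p) * (n + p - 1)"
  have "n * R - Q * (s + p)
      = (2 * n - 3) * s\<^sup>2 + (n * (4 * n - 3) + 2 + 5 * p * (n - 1)) * s
        + 2 * (n + p)\<^sup>2 * (n - 1) + 2 * p"
    by (simp add: Q_def R_def algebra_simps power2_eq_square)
  also have "\<dots> > 0"
    using n p s by (intro add_pos_nonneg mult_pos_pos mult_nonneg_nonneg) auto
  finally have QR: "Q * (s + p) < n * R" by simp
  have "(p + 1) * s\<^sup>2 \<le> (n + p) * Q"
    using n p cond by (intro mult_mono) (auto simp: Q_def)
  then have "(p + 1) * s\<^sup>2 * (s + p) \<le> (n + p) * (Q * (s + p))"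
    using p s by (simp add: mult_right_mono mult.assoc)
  also have "\<dots> < (n + p) * (n * R)"
    using QR n p by simp
  finally show ?thesis
    by (simp add: R_def algebra_simps)
qed

(* a, b, c stand for b_(n-1), b_n, b_(n+1), and m for d - k. *)

lemma A_coeff_pos_of_ratios:
  fixes n m k a b c :: real
  assumes n: "2 \<le> n" "n \<le> m" and "m < k" and "0 < b"
    and cond: "(k - m)\<^sup>2 < 2 * m + 3 * (k - m) - 2"
    and ratio_a: "n * (k + m - n + 1) * b = (m - n + 1) * (k - n + 1) * a"
    and ratio_c: "(n + 1) * (k + m - n) * c = (m - n) * (k - n) * b"
  shows "0 < a + (2 - (k + m) / (2 * m)) * b - ((n - 1) * a + 3 * n * b + 2 * (n + 1) * c) / k"
    (is "0 < ?L")
proof -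
  define N where "N = n * m * (2 * (k - m)\<^sup>2 + (4 * n + 5 * (m - n) - 1) * (k - m) + 2 * m * (m - 1))
      - (m - n + 1) * (k - m)\<^sup>2 * (k - n)"
  have pos: "0 < m" "0 < k" "0 < k + m - n" "0 < m - n + 1"
    using n \<open>m < k\<close> by auto
  have L_scaled: "?L * (2 * m * k)
      = 2 * m * (k - n + 1) * a + (4 * m * k - (k + m) * k - 6 * m * n) * b - 4 * m * (n + 1) * c"
    using pos by (simp add: field_simps)
  have "?L * (2 * m * k) * ((k + m - n) * (m - n + 1))
      = (2 * m * (k - n + 1) * a + (4 * m * k - (k + m) * k - 6 * m * n) * b - 4 * m * (n + 1) * c)
        * ((k + m - n) * (m - n + 1))"
    unfolding L_scaled ..
  also have "\<dots> = 2 * m * (k + m - n) * ((m - n + 1) * (k - n + 1) * a)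
        + (4 * m * k - (k + m) * k - 6 * m * n) * b * ((k + m - n) * (m - n + 1))
        - 4 * m * (m - n + 1) * ((n + 1) * (k + m - n) * c)"
    by (simp add: algebra_simps)
  also have "\<dots> = b * N"
    unfolding ratio_a[symmetric] ratio_c N_def
    by (simp add: algebra_simps power2_eq_square)
  finally have L_eq: "?L * (2 * m * k * ((k + m - n) * (m - n + 1))) = b * N"
    by (simp add: mult.assoc)
  have "0 < N"
    using key_inequality[of n "m - n" "k - m"] n \<open>m < k\<close> cond by (simp add: N_def)
  then have "0 < ?L * (2 * m * k * ((k + m - n) * (m - n + 1)))"
    using L_eq \<open>0 < b\<close> by simp
  moreover have "0 < 2 * m * k * ((k + m - n) * (m - n + 1))"
    using pos by simp
  ultimately show ?thesis
    by (rule zero_less_mult_pos2)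
qed

lemma coeff_A_poly_pos:
  assumes "d - k < k" "k \<le> d"
    and cond: "(2 * real k - real d)\<^sup>2 < 4 * real k - real d - 2"
    and j: "1 \<le> j" "j \<le> d - k"
  shows "0 < coeff (A_poly d k) (Suc j)"
proof (cases "j = d - k")
  case True
  moreover have "0 < real k"
    using \<open>d - k < k\<close> by simp
  ultimately have "coeff (A_poly d k) (Suc j) = g_coeff d k j * (real k - real j) / real k"
    by (simp add: coeff_A_poly_Suc g_coeff_eq_0 field_simps)
  then show ?thesis
    using g_coeff_pos[OF \<open>k \<le> d\<close> j(2)] True \<open>d - k < k\<close> by simp
next
  case False
  define m where "m = real (d - k)"
  define n where "n = real (Suc j)"
  have real_d: "real d = real k + m"
    using \<open>k \<le> d\<close> by (simp add: m_def)
  have "0 < g_coeff d k j + (2 - (real k + m) / (2 * m)) * g_coeff d k (Suc j)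
      - ((n - 1) * g_coeff d k j + 3 * n * g_coeff d k (Suc j) + 2 * (n + 1) * g_coeff d k (j + 2))
        / real k"
  proof (rule A_coeff_pos_of_ratios)
    show "2 \<le> n" "n \<le> m" "m < real k"
      using j False \<open>d - k < k\<close> by (simp_all add: n_def m_def)
    show "0 < g_coeff d k (Suc j)"
      using False j by (intro g_coeff_pos \<open>k \<le> d\<close>) simp
    show "(real k - m)\<^sup>2 < 2 * m + 3 * (real k - m) - 2"
      using cond by (simp add: real_d algebra_simps)
    show "n * (real k + m - n + 1) * g_coeff d k (Suc j)
        = (m - n + 1) * (real k - n + 1) * g_coeff d k j"
      using g_coeff_Suc_ratio[of d k j] assms False by (simp add: n_def m_def of_nat_diff)
    show "(n + 1) * (real k + m - n) * g_coeff d k (j + 2)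
        = (m - n) * (real k - n) * g_coeff d k (Suc j)"
      using g_coeff_Suc_ratio[of d k "Suc j"] assms False by (simp add: n_def m_def of_nat_diff)
  qed
  then show ?thesis
    by (simp add: coeff_A_poly_Suc real_d n_def m_def)
qed

lemma coeff_A_poly_eq_0: "d - k < j \<Longrightarrow> coeff (A_poly d k) (Suc j) = 0"
  by (simp add: coeff_A_poly_Suc g_coeff_eq_0)

lemma coeff_A_poly_1:
  assumes "d - k < k" "k < d"
  shows "coeff (A_poly d k) 1
       = real k * (4 * real k - real d - 2 - (2 * real k - real d)\<^sup>2) / (2 * real d * (real d - 1))"
proof -
  define m where "m = real (d - k)"
  have real_d: "real d = real k + m" and "1 \<le> m" "m < real k"
    using assms by (simp_all add: m_def of_nat_diff)
  have b1: "g_coeff d k 1 = m * real k / real d"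
    using g_coeff_Suc_ratio[of d k 0] g_coeff_0[of k d] assms by (simp add: m_def field_simps)
  have b2: "g_coeff d k 2 = (m - 1) * (real k - 1) * g_coeff d k 1 / (2 * (real d - 1))"
    using g_coeff_Suc_ratio[of d k 1] assms by (simp add: m_def of_nat_diff field_simps numeral_2_eq_2)
  have "coeff (A_poly d k) 1
      = 1 + (2 - real d / (2 * m)) * g_coeff d k 1 - (3 * g_coeff d k 1 + 4 * g_coeff d k 2) / real k"
    using coeff_A_poly_Suc[of d k 0] g_coeff_0[of k d] assms by (simp add: m_def numeral_2_eq_2)
  also have "\<dots> = real k * (4 * real k - real d - 2 - (2 * real k - real d)\<^sup>2) / (2 * real d * (real d - 1))"
  proof -
    have "m \<noteq> 0" "real k \<noteq> 0" "real d \<noteq> 0" "real d - 1 \<noteq> 0"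
      using \<open>1 \<le> m\<close> \<open>m < real k\<close> real_d by auto
    then show ?thesis
      unfolding b2 b1 by (simp add: field_simps) (simp add: real_d algebra_simps power2_eq_square)
  qed
  finally show ?thesis .
qed

theorem lemma14:
  fixes d k :: nat
  assumes "real d / 2 < real k" and "k < d"
    and "(2 * real k - real d)^2 < 4 * real k - real d - 2"
  shows "(\<forall>t::real. t \<ge> 1 \<longrightarrow> deriv (deriv (A d k)) t > 0)
       \<and> deriv (A d k) 1 = real k * (4 * real k - real d - 2 - (2 * real k - real d)^2)
                              / (2 * real d * (real d - 1))"
proof -
  have "d - k < k" "k \<le> d"
    using assms(1,2) by linarith+
  have dA: "deriv (A d k) = (\<lambda>t. poly (pderiv (A_poly d k)) (t - 1))"
    using A_eq_poly_shift \<open>d - k < k\<close> \<open>k \<le> d\<close> by (simp add: deriv_poly_shift)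
  have coeff_nonneg: "0 \<le> coeff (A_poly d k) (Suc j)" if "1 \<le> j" for j
    using coeff_A_poly_pos[OF \<open>d - k < k\<close> \<open>k \<le> d\<close> assms(3) that] coeff_A_poly_eq_0[of d k j]
    by (cases "j \<le> d - k") auto
  have "0 < deriv (deriv (A d k)) t" if "1 \<le> t" for t
    unfolding dA deriv_poly_shift
  proof (rule poly_pos_if_coeffs_nonneg)
    show "0 \<le> coeff (pderiv (pderiv (A_poly d k))) i" for i
      using coeff_nonneg[of "Suc i"] by (simp add: coeff_pderiv)
    show "0 < coeff (pderiv (pderiv (A_poly d k))) 0"
      using coeff_A_poly_pos[OF \<open>d - k < k\<close> \<open>k \<le> d\<close> assms(3), of 1] assms(2)
      by (simp add: coeff_pderiv)
    show "0 \<le> t - 1"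
      using that by simp
  qed
  moreover have "deriv (A d k) 1 = coeff (A_poly d k) 1"
    by (simp add: dA poly_0_coeff_0 coeff_pderiv)
  ultimately show ?thesis
    using coeff_A_poly_1[OF \<open>d - k < k\<close> assms(2)] by simp
qed

end
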